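(* Let $q$ be an odd prime power, let $f$ be a normal planar function on $\mathbb F_{q^2}$, and let $\theta\in\mathbb F_{q^2}^*$ satisfy: for every $c\in\mathbb F_q$, $\#\{x\in\mathbb F_{q^2}:\theta_1f_0(x)-\theta_0f_1(x)=c\}$ equals $q+1$ if $c\neq0$ and $1$ if $c=0$ (so that $\mathcal U_\theta:=\{(x,t\theta):x\in\mathbb F_{q^2},t\in\mathbb F_q\}\cup\{(\infty)\}$ is a unital in $\Pi(f)$). Then for each $c\in\mathbb F_{q^2}$ the set \[\mathcal O_c:=\{(x,c):x\in\mathbb F_{q^2}\}\cup\{(\infty)\}\] is an oval in $\Pi(f)$, and $\mathcal U_\theta=\bigcup_{t\in\mathbb F_q}\mathcal O_{t\theta}$ is a union of ovals.
   Context: A function $f:\mathbb F_{q^2}\to\mathbb F_{q^2}$ is planar if for every $a\neq0$ the map $x\mapsto f(x+a)-f(x)$ is a bijection; it is a normal planar function if moreover $f(0)=0$ and, for all $a,b$, $f(a)=f(b)$ iff $a=\pm b$. For planar $f$, $\Pi(f)$ is the projective plane with points $(x,y)\in\mathbb F_{q^2}^2$ and $(a)$ for $a\in\mathbb F_{q^2}\cup\{\infty\}$, and lines $L_{a,b}=\{(x,f(x+a)-b):x\in\mathbb F_{q^2}\}\cup\{(a)\}$, $N_a=\{(a,y):y\in\mathbb F_{q^2}\}\cup\{(\infty)\}$ ($a,b\in\mathbb F_{q^2}$), $L_\infty=\{(a):a\in\mathbb F_{q^2}\cup\{\infty\}\}$, incidence being membership. A unital is a set of $q^3+1$ points meeting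 every line in $1$ or $q+1$ points. An oval in a projective plane of odd order $N$ is a set of $N+1$ points meeting every line in $0$, $1$ or $2$ points. A fixed $\xi\in\mathbb F_{q^2}\setminus\mathbb F_q$ is chosen; elements are written $\theta=\theta_0+\theta_1\xi$ and $f(x)=f_0(x)+f_1(x)\xi$ with $\theta_i\in\mathbb F_q$, $f_i(x)\in\mathbb F_q$. *)

theory Defs
  imports "HOL-Computational_Algebra.Primes"
begin

text \<open>The field F_{q^2} is a finite field type 'a with CARD('a) = q^2;
  its subfield F_q is the set of elements fixed by x \<mapsto> x^q.\<close>

definition subF :: "nat \<Rightarrow> 'a::field set" where
  "subF q = {x. x ^ q = x}"

definition coord0 :: "nat \<Rightarrow> 'a::field \<Rightarrow> 'a \<Rightarrow> 'a" where
  "coord0 q \<xi> \<theta> = fst (THE p. fst p \<in> subF q \<and> snd p \<in> subF q \<and> \<theta> = fst p + snd p * \<xi>)"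

definition coord1 :: "nat \<Rightarrow> 'a::field \<Rightarrow> 'a \<Rightarrow> 'a" where
  "coord1 q \<xi> \<theta> = snd (THE p. fst p \<in> subF q \<and> snd p \<in> subF q \<and> \<theta> = fst p + snd p * \<xi>)"

definition planar :: "('a::field \<Rightarrow> 'a) \<Rightarrow> bool" where
  "planar f \<longleftrightarrow> (\<forall>a. a \<noteq> 0 \<longrightarrow> bij (\<lambda>x. f (x + a) - f x))"

definition normal_planar :: "('a::field \<Rightarrow> 'a) \<Rightarrow> bool" where
  "normal_planar f \<longleftrightarrow> planar f \<and> f 0 = 0 \<and> (\<forall>a b. f a = f b \<longleftrightarrow> (a = b \<or> a = - b))"

text \<open>Points of Pi(f): affine points (x,y), and points at infinity (a),
  where Dir None represents (\<infinity>) and Dir (Some a) represents (a).\<close>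
datatype 'a pt = Aff 'a 'a | Dir "'a option"

datatype 'a ln = L 'a 'a | N 'a | Linf

fun line_pts :: "('a::field \<Rightarrow> 'a) \<Rightarrow> 'a ln \<Rightarrow> 'a pt set" where
  "line_pts f (L a b) = {Aff x (f (x + a) - b) | x. True} \<union> {Dir (Some a)}"
| "line_pts f (N a) = {Aff a y | y. True} \<union> {Dir None}"
| "line_pts f Linf = {Dir d | d. True}"

definition is_oval :: "('a::{field,finite} \<Rightarrow> 'a) \<Rightarrow> 'a pt set \<Rightarrow> bool" where
  "is_oval f S \<longleftrightarrow> finite S \<and> card S = card (UNIV :: 'a set) + 1 \<and>
     (\<forall>l. card (S \<inter> line_pts f l) \<le> 2)"

definition oval_set :: "'a \<Rightarrow> 'a pt set" where
  "oval_set c = {Aff x c | x. True} \<union> {Dir None}"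

definition unital_set :: "nat \<Rightarrow> 'a::field \<Rightarrow> 'a pt set" where
  "unital_set q \<theta> = {Aff x (t * \<theta>) | x t. t \<in> subF q} \<union> {Dir None}"

end

theory Submission
  imports Defs
begin

text \<open>The affine part of \<open>\<O>\<^sub>c\<close> meets \<open>L\<^sub>a\<^sub>,\<^sub>b\<close> in the points \<open>(y - a, c)\<close> with
  \<open>f y = b + c\<close>, and a normal planar function is injective up to sign, so there are at most
  two of them. Every other line meets \<open>\<O>\<^sub>c\<close> in at most one affine point and \<open>(\<infinity>)\<close>.\<close>

lemma card_fibre_le_2:
  fixes f :: "'a::{ring,finite} \<Rightarrow> 'b"
  assumes "\<And>u v. f u = f v \<Longrightarrow> u = v \<or> u = - v"
  shows "card {x. f x = d} \<le> 2"
proof (cases "\<exists>x0. f x0 = d")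
  case True
  then obtain x0 where "f x0 = d" by blast
  then have "{x. f x = d} \<subseteq> {x0, - x0}" using assms[of _ x0] by auto
  then have "card {x. f x = d} \<le> card {x0, - x0}" by (intro card_mono) auto
  also have "\<dots> \<le> 2" by (simp add: card_insert_le_m1)
  finally show ?thesis .
qed simp

lemma card_oval_set:
  "card (oval_set c :: 'a::finite pt set) = card (UNIV :: 'a set) + 1"
proof -
  have "oval_set c = insert (Dir None) (range (\<lambda>x. Aff x c))"
    unfolding oval_set_def by auto
  moreover have "card (range (\<lambda>x. Aff x c)) = card (UNIV :: 'a set)"
    by (rule card_image) (auto intro: injI)
  ultimately show ?thesis by (simp add: card_insert_disjoint image_iff)
qed

lemma oval_set_Int_L:
  "oval_set c \<inter> line_pts f (L a b) = (\<lambda>y. Aff (y - a) c) ` {y. f y = b + c}"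
proof (intro equalityI subsetI)
  fix p assume "p \<in> oval_set c \<inter> line_pts f (L a b)"
  then obtain x where "p = Aff x c" "f (x + a) - b = c" unfolding oval_set_def by auto
  then show "p \<in> (\<lambda>y. Aff (y - a) c) ` {y. f y = b + c}"
    by (auto simp: image_iff algebra_simps intro!: exI[of _ "x + a"])
next
  fix p assume "p \<in> (\<lambda>y. Aff (y - a) c) ` {y. f y = b + c}"
  then obtain y where "p = Aff (y - a) c" "f y = b + c" by auto
  then show "p \<in> oval_set c \<inter> line_pts f (L a b)"
    unfolding oval_set_def by (auto intro!: exI[of _ "y - a"])
qed

lemma card_oval_set_Int_line_le_2:
  fixes f :: "'a::{field,finite} \<Rightarrow> 'a"
  assumes "\<And>u v. f u = f v \<Longrightarrow> u = v \<or> u = - v"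
  shows "card (oval_set c \<inter> line_pts f l) \<le> 2"
proof (cases l)
  case (L a b)
  have "card ((\<lambda>y. Aff (y - a) c) ` {y. f y = b + c}) \<le> card {y. f y = b + c}"
    by (rule card_image_le) simp
  also have "\<dots> \<le> 2" using card_fibre_le_2 assms .
  finally show ?thesis unfolding L oval_set_Int_L .
next
  case (N a)
  have "oval_set c \<inter> line_pts f l \<subseteq> {Aff a c, Dir None}"
    unfolding N oval_set_def by auto
  then have "card (oval_set c \<inter> line_pts f l) \<le> card {Aff a c, Dir None :: 'a pt}"
    by (intro card_mono) auto
  then show ?thesis by simp
next
  case Linf
  then have "oval_set c \<inter> line_pts f l = {Dir None}"
    unfolding oval_set_def by auto
  then show ?thesis by simp
qed

lemma is_oval_oval_set:
  fixes f :: "'a::{field,finite} \<Rightarrow> 'a"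
  assumes "normal_planar f"
  shows "is_oval f (oval_set c)"
proof -
  have "\<And>u v. f u = f v \<Longrightarrow> u = v \<or> u = - v"
    using assms by (simp add: normal_planar_def)
  then have "\<forall>l. card (oval_set c \<inter> line_pts f l) \<le> 2"
    using card_oval_set_Int_line_le_2 by blast
  moreover have "finite (oval_set c)"
    by (rule card_ge_0_finite) (simp add: card_oval_set)
  ultimately show ?thesis
    unfolding is_oval_def by (simp add: card_oval_set)
qed

lemma unital_set_eq_Union_oval_set:
  assumes "q > 0"
  shows "unital_set q \<theta> = (\<Union>t \<in> subF q. oval_set (t * \<theta>))"
proof -
  have "0 \<in> subF q" using assms by (simp add: subF_def)
  then show ?thesis unfolding unital_set_def oval_set_def by blast
qed

theorem proposition3p1:
  fixes f :: "'a::{field,finite} \<Rightarrow> 'a" and q :: nat and \<xi> \<theta> :: 'a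
  assumes q_pp: "\<exists>p k. prime p \<and> k > 0 \<and> q = p ^ k"
    and q_odd: "odd q"
    and card: "card (UNIV :: 'a set) = q ^ 2"
    and xi: "\<xi> \<notin> subF q"
    and npl: "normal_planar f"
    and theta: "\<theta> \<noteq> 0"
    and count: "\<forall>c \<in> subF q.
       card {x. coord1 q \<xi> \<theta> * coord0 q \<xi> (f x) - coord0 q \<xi> \<theta> * coord1 q \<xi> (f x) = c}
         = (if c \<noteq> 0 then q + 1 else 1)"
  shows "(\<forall>c. is_oval f (oval_set c)) \<and>
         unital_set q \<theta> = (\<Union>t \<in> subF q. oval_set (t * \<theta>))"
proof
  show "\<forall>c. is_oval f (oval_set c)" using is_oval_oval_set[OF npl] by blast
  from q_odd have "q > 0" by (rule odd_pos)
  then show "unital_set q \<theta> = (\<Union>t \<in> subF q. oval_set (t * \<theta>))"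
    by (rule unital_set_eq_Union_oval_set)
qed

end
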